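(* Let $n\ge 3$ and let $\Gamma\subset GL(n,\mathbb R)$ be the group of block matrices $\begin{pmatrix} A & b\\ 0 & 1\end{pmatrix}$ with $A\in GL(n-1,\mathbb Z)$ and $b\in\mathbb Z^{n-1}$, acting linearly on $\mathbb R^n$. Then every non-zero $x\in\mathbb R^n$ has unbounded $\Gamma$-orbit (so the action of $\Gamma$ on $\mathbb R^n$ is expansive), yet no element $\gamma\in\Gamma$ is an expansive automorphism of $\mathbb R^n$, i.e. for no $\gamma\in\Gamma$ does the cyclic group $\{\gamma^m:m\in\mathbb Z\}$ act expansively on $\mathbb R^n$.
   Context: An action of a group $\Gamma$ on $\mathbb R^n$ (additive topological group) by linear automorphisms is expansive if there is a neighborhood $U$ of $0$ with $\bigcap_{\gamma\in\Gamma}\gamma^{-1}(U)=\{0\}$. *)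

theory Defs
  imports "HOL-Analysis.Analysis"
begin

text \<open>R^n is modelled as real ^ ('m option) with n = CARD('m) + 1; the coordinates
  Some i (i :: 'm) are the first n-1 coordinates and None is the last coordinate.\<close>

definition integer_matrix :: "real ^ 'm ^ 'm \<Rightarrow> bool" where
  "integer_matrix A \<longleftrightarrow> (\<forall>i j. A $ i $ j \<in> \<int>)"

definition GL_int :: "(real ^ 'm ^ 'm) set" where
  "GL_int = {A. integer_matrix A \<and>
      (\<exists>B. integer_matrix B \<and> A ** B = mat 1 \<and> B ** A = mat 1)}"

definition Gamma_aff :: "(real ^ ('m::finite option) ^ ('m option)) set" where
  "Gamma_aff = {M. (\<exists>A \<in> (GL_int :: (real ^ 'm ^ 'm) set). \<forall>i j. M $ Some i $ Some j = A $ i $ j)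
      \<and> (\<forall>i. M $ Some i $ None \<in> \<int>)
      \<and> (\<forall>j. M $ None $ Some j = 0)
      \<and> M $ None $ None = 1}"

definition expansive :: "('a::topological_space \<Rightarrow> 'a) set \<Rightarrow> 'a \<Rightarrow> bool" where
  "expansive G z \<longleftrightarrow> (\<exists>U. z \<in> interior U \<and> (\<Inter>g\<in>G. g -` U) = {z})"

definition cyclic_group :: "('a \<Rightarrow> 'a) \<Rightarrow> ('a \<Rightarrow> 'a) set" where
  "cyclic_group f = {f ^^ k | k. True} \<union> {(inv f) ^^ k | k. True}"

end

theory Submission
  imports Defs
begin

text \<open>For x \<noteq> 0 pick a coordinate q with x_q \<noteq> 0 and a coordinate p \<noteq> q among the first n-1.
  The integer transvections x_p \<mapsto> x_p + k x_q lie in \<Gamma> and move x arbitrarily far, so every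
  orbit of a non-zero vector is unbounded; since 0 is fixed, the unit ball already witnesses
  expansiveness of \<Gamma>. On the other hand every \<gamma> \<in> \<Gamma> preserves the last coordinate, so
  \<gamma> - 1 is singular and \<gamma> has a fixed line through 0, which every power of \<gamma> fixes pointwise;
  a fixed line meets every neighbourhood of 0, so no single \<gamma> is expansive.\<close>

lemma expansive_if_unbounded_orbits:
  fixes G :: "('a::real_normed_vector \<Rightarrow> 'a) set"
  assumes "\<And>g. g \<in> G \<Longrightarrow> g 0 = 0"
    and "\<And>x. x \<noteq> 0 \<Longrightarrow> \<not> bounded ((\<lambda>g. g x) ` G)"
  shows "expansive G 0"
  unfolding expansive_def
proof (intro exI conjI)
  show "(0::'a) \<in> interior (ball 0 1)" by simp
  have "x = 0" if "x \<in> (\<Inter>g\<in>G. g -` ball 0 1)" for x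
  proof -
    from that have "(\<lambda>g. g x) ` G \<subseteq> ball 0 1" by auto
    then show "x = 0" using assms(2) bounded_ball bounded_subset by blast
  qed
  moreover have "0 \<in> (\<Inter>g\<in>G. g -` ball 0 1)" by (auto dest: assms(1))
  ultimately show "(\<Inter>g\<in>G. g -` ball 0 1) = {0}" by blast
qed

lemma cyclic_group_fixes:
  assumes "inj f" "f w = w" "g \<in> cyclic_group f"
  shows "g w = w"
proof -
  have fixes_power: "h w = w \<Longrightarrow> (h ^^ k) w = w" for h :: "'a \<Rightarrow> 'a" and k
    by (induction k) auto
  have "inv f w = w" using inv_f_f[OF assms(1), of w] assms(2) by simp
  then show ?thesis using assms(2,3) fixes_power unfolding cyclic_group_def by auto
qed

lemma not_expansive_cyclic_group_if_fixed_vector: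
  fixes f :: "'a::real_normed_vector \<Rightarrow> 'a"
  assumes "linear f" "inj f" "f v = v" "v \<noteq> 0"
  shows "\<not> expansive (cyclic_group f) 0"
proof
  assume "expansive (cyclic_group f) 0"
  then obtain U where U: "0 \<in> interior U" "(\<Inter>g\<in>cyclic_group f. g -` U) = {0}"
    unfolding expansive_def by blast
  obtain e where e: "e > 0" "ball 0 e \<subseteq> U" using U(1) mem_interior by blast
  define w where "w = (e / 2 / norm v) *\<^sub>R v"
  have "f w = w" using assms(1,3) by (simp add: w_def linear_scale)
  then have fixed: "g w = w" if "g \<in> cyclic_group f" for g
    by (rule cyclic_group_fixes[OF assms(2) _ that])
  have "norm w = e / 2" using e(1) assms(4) by (simp add: w_def)
  then have "w \<in> U" using e by auto
  then have "w \<in> (\<Inter>g\<in>cyclic_group f. g -` U)" by (auto dest: fixed)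
  moreover have "w \<noteq> 0" using e(1) assms(4) by (simp add: w_def)
  ultimately show False using U(2) by blast
qed

lemma fixed_vector_if_coordinate_preserved:
  fixes M :: "real ^ 'n ^ 'n"
  assumes "\<And>x. (M *v x) $ k = x $ k"
  shows "\<exists>v. v \<noteq> 0 \<and> M *v v = v"
proof -
  define h where "h = (\<lambda>x. (M - mat 1) *v x)"
  have "linear h" unfolding h_def by (rule matrix_vector_mul_linear)
  have "h x $ k = 0" for x by (simp add: h_def matrix_vector_mult_diff_rdistrib assms)
  then have "axis k 1 \<notin> range h" by (metis axis_nth imageE zero_neq_one)
  then have "\<not> inj h" using \<open>linear h\<close> eucl.linear_inj_imp_surj by blast
  then obtain v where "h v = 0" "v \<noteq> 0" using linear_injective_0[OF \<open>linear h\<close>] by blast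
  then show ?thesis by (auto simp: h_def matrix_vector_mult_diff_rdistrib)
qed

definition transvection :: "'n::finite \<Rightarrow> 'n \<Rightarrow> real \<Rightarrow> real ^ 'n ^ 'n" where
  "transvection p q k = (\<chi> r c. (if r = c then 1 else 0) + (if r = p \<and> c = q then k else 0))"

lemma if_zero_mult:
  "(if b then x else (0::real)) * y = (if b then x * y else 0)"
  "y * (if b then x else (0::real)) = (if b then y * x else 0)"
  by simp_all

lemma transvection_mult_inverse:
  assumes "p \<noteq> q"
  shows "transvection p q k ** transvection p q (-k) = mat 1"
proof -
  have if_conj: "(if a \<and> b then x else (0::real)) = (if a then (if b then x else 0) else 0)"
    for a b x by simp
  show ?thesis using assms
    unfolding transvection_def matrix_matrix_mult_def mat_def
    by (simp add: vec_eq_iff distrib_left distrib_right sum.distrib if_zero_mult if_conj)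
qed

lemma transvection_apply:
  assumes "p \<noteq> q"
  shows "(transvection p q k *v x) $ p = x $ p + k * x $ q"
  using assms unfolding transvection_def matrix_vector_mult_def
  by (simp add: distrib_right sum.distrib if_zero_mult)

lemma transvection_in_GL_int:
  assumes "p \<noteq> q" "k \<in> \<int>"
  shows "transvection p q k \<in> GL_int"
proof -
  have integer: "integer_matrix (transvection p q l)" if "l \<in> \<int>" for l
    using that unfolding transvection_def integer_matrix_def by auto
  have "transvection p q (- k) ** transvection p q k = mat 1"
    using transvection_mult_inverse[OF assms(1), of "- k"] by simp
  moreover have "integer_matrix (transvection p q (- k))" using assms(2) by (simp add: integer)
  ultimately show ?thesis
    unfolding GL_int_def using integer[OF assms(2)] transvection_mult_inverse[OF assms(1)] by blast
qed

lemma mat_1_in_GL_int: "(mat 1 :: real ^ 'n ^ 'n) \<in> GL_int"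
proof -
  have "integer_matrix (mat 1 :: real ^ 'n ^ 'n)" unfolding integer_matrix_def by (simp add: mat_def)
  then show ?thesis unfolding GL_int_def using matrix_mul_lid[of "mat 1"] by blast
qed

lemma transvection_in_Gamma_aff:
  fixes i :: "'m::finite"
  assumes "Some i \<noteq> q" "k \<in> \<int>"
  shows "transvection (Some i) q k \<in> Gamma_aff"
proof -
  have "\<exists>A \<in> (GL_int :: (real ^ 'm ^ 'm) set).
          \<forall>a b. transvection (Some i) q k $ Some a $ Some b = A $ a $ b"
  proof (cases q)
    case None
    then show ?thesis using mat_1_in_GL_int
      by (intro bexI[of _ "mat 1"]) (auto simp: transvection_def mat_def)
  next
    case (Some j)
    then show ?thesis using assms transvection_in_GL_int[of i j k]
      by (intro bexI[of _ "transvection i j k"]) (auto simp: transvection_def)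
  qed
  then show ?thesis unfolding Gamma_aff_def using assms by (auto simp: transvection_def)
qed

lemma unbounded_transvection_orbit:
  assumes "p \<noteq> q" "x $ q \<noteq> 0"
  shows "\<not> bounded {transvection p q (real k) *v x | k. True}"
proof
  assume "bounded {transvection p q (real k) *v x | k. True}"
  then obtain a where a: "\<And>k. norm (transvection p q (real k) *v x) \<le> a"
    unfolding bounded_iff by blast
  obtain k :: nat where "(a + \<bar>x $ p\<bar>) / \<bar>x $ q\<bar> < real k" using reals_Archimedean2 by blast
  then have k: "a + \<bar>x $ p\<bar> < real k * \<bar>x $ q\<bar>" using assms(2) by (simp add: divide_less_eq)
  have "\<bar>x $ p + real k * x $ q\<bar> \<le> a"
    using component_le_norm_cart[of "transvection p q (real k) *v x" p] a[of k]
    by (simp add: transvection_apply[OF assms(1)])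
  then show False using k by (simp add: abs_mult abs_le_iff) linarith
qed

lemma Gamma_aff_orbit_unbounded:
  assumes "CARD('m::finite) \<ge> 2" "(x :: real ^ ('m option)) \<noteq> 0"
  shows "\<not> bounded {M *v x | M. M \<in> (Gamma_aff :: (real ^ ('m option) ^ ('m option)) set)}"
proof -
  obtain i q where iq: "Some i \<noteq> q" "x $ q \<noteq> 0"
  proof (cases "x $ None = 0")
    case False
    then show ?thesis by (intro that[of _ None]) auto
  next
    case True
    with assms(2) obtain j where "x $ Some j \<noteq> 0"
      by (metis option.exhaust vec_eq_iff zero_index)
    moreover obtain i where "i \<noteq> j"
    proof (rule ccontr)
      assume "\<not> thesis"
      with that have "(UNIV :: 'm set) = {j}" by blast
      then have "CARD('m) = card {j}" by (rule arg_cong)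
      with assms(1) show False by simp
    qed
    ultimately show ?thesis using that[of i "Some j"] by auto
  qed
  have "{transvection (Some i) q (real k) *v x | k. True}
          \<subseteq> {M *v x | M. M \<in> (Gamma_aff :: (real ^ ('m option) ^ ('m option)) set)}"
    using transvection_in_Gamma_aff[OF iq(1)] by auto
  then show ?thesis using unbounded_transvection_orbit[OF iq] bounded_subset by blast
qed

lemma sum_UNIV_option:
  fixes f :: "'a::finite option \<Rightarrow> 'b::comm_monoid_add"
  shows "sum f UNIV = f None + (\<Sum>i\<in>UNIV. f (Some i))"
proof -
  have "sum f UNIV = f None + sum f (range Some)"
    by (simp add: UNIV_option_conv)
  also have "sum f (range Some) = (\<Sum>i\<in>UNIV. f (Some i))" by (subst sum.reindex) auto
  finally show ?thesis .
qed

lemma Gamma_aff_last_coordinate: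
  assumes "M \<in> Gamma_aff"
  shows "(M *v x) $ None = x $ None"
  using assms unfolding Gamma_aff_def
  by (simp add: matrix_vector_mult_def sum_UNIV_option)

lemma Gamma_aff_inj:
  assumes "(M :: real ^ ('m::finite option) ^ ('m option)) \<in> Gamma_aff"
  shows "inj (\<lambda>x. M *v x)"
  unfolding linear_injective_0[OF matrix_vector_mul_linear]
proof (intro allI impI)
  fix x assume Mx: "M *v x = 0"
  obtain A where A: "A \<in> (GL_int :: (real ^ 'm ^ 'm) set)" "\<And>i j. M $ Some i $ Some j = A $ i $ j"
    using assms unfolding Gamma_aff_def by blast
  obtain B where B: "B ** A = mat 1" using A(1) unfolding GL_int_def by blast
  have x_last: "x $ None = 0" using Mx Gamma_aff_last_coordinate[OF assms, of x] by simp
  define y where "y = (\<chi> j. x $ Some j)"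
  have "(A *v y) $ i = (M *v x) $ Some i" for i
    by (simp add: matrix_vector_mult_def sum_UNIV_option x_last A(2) y_def)
  then have "A *v y = 0" using Mx by (simp add: vec_eq_iff)
  then have "y = 0" using B by (metis matrix_vector_mul_assoc matrix_vector_mul_lid matrix_vector_mult_0_right)
  with x_last show "x = 0" by (simp add: y_def vec_eq_iff) (metis option.exhaust)
qed

theorem mainTheorem11:
  assumes "CARD('m::finite) \<ge> 2"
  shows "(\<forall>x :: real ^ ('m option). x \<noteq> 0 \<longrightarrow>
            \<not> bounded {M *v x | M. M \<in> (Gamma_aff :: (real ^ ('m option) ^ ('m option)) set)})
       \<and> expansive ((\<lambda>M. (\<lambda>x. M *v x)) ` (Gamma_aff :: (real ^ ('m option) ^ ('m option)) set)) 0
       \<and> (\<forall>\<gamma> \<in> (Gamma_aff :: (real ^ ('m option) ^ ('m option)) set).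
            \<not> expansive (cyclic_group (\<lambda>x. \<gamma> *v x)) 0)"
proof (intro conjI allI impI ballI)
  show "\<not> bounded {M *v x | M. M \<in> Gamma_aff}" if "x \<noteq> 0" for x :: "real ^ ('m option)"
    using Gamma_aff_orbit_unbounded[OF assms that] .
  then show "expansive ((\<lambda>M x. M *v x) ` (Gamma_aff :: (real ^ ('m option) ^ ('m option)) set)) 0"
    by (intro expansive_if_unbounded_orbits) (auto simp: image_image setcompr_eq_image)
next
  fix \<gamma> :: "real ^ ('m option) ^ ('m option)"
  assume \<gamma>: "\<gamma> \<in> Gamma_aff"
  obtain v where "v \<noteq> 0" "\<gamma> *v v = v"
    using fixed_vector_if_coordinate_preserved Gamma_aff_last_coordinate[OF \<gamma>] by blast
  then show "\<not> expansive (cyclic_group (\<lambda>x. \<gamma> *v x)) 0"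
    using not_expansive_cyclic_group_if_fixed_vector[OF matrix_vector_mul_linear Gamma_aff_inj[OF \<gamma>]]
    by blast
qed

end
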